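(* Let $\chi:\mathcal H\to\mathcal H_L^\chi\otimes\mathcal H_R^\chi$ be a splitting map. The set $\mathrm{stloc}(\chi)$ of strictly $\chi$-local operators is a Von Neumann subalgebra of $\mathcal L(\mathcal H)$.
   Context: All Hilbert spaces are finite-dimensional and complex. A Von Neumann subalgebra of $\mathcal L(\mathcal H)$ is a $*$-subalgebra closed under adjoint and containing $\mathbb 1_{\mathcal H}$. A splitting map on $\mathcal H$ is an isometry $\chi:\mathcal H\to\mathcal H_L^\chi\otimes\mathcal H_R^\chi$. $A\in\mathcal L(\mathcal H)$ is strictly $\chi$-local if there exists $\tilde A\in\mathcal L(\mathcal H_L^\chi)$ with $A\chi^\dagger=\chi^\dagger(\tilde A\otimes\mathbb 1)$ and $\chi A=(\tilde A\otimes\mathbb 1)\chi$. *)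

theory Defs
  imports "HOL-Analysis.Analysis"
begin

text \<open>Finite-dimensional complex Hilbert spaces are modelled as coordinate spaces
  complex ^ 'n with 'n a finite index type; linear operators H -> K are matrices
  complex ^ 'n ^ 'k (rows indexed by the codomain). The tensor product
  H_L (x) H_R is complex ^ ('l \<times> 'r).\<close>

definition adj :: "complex ^ 'n ^ 'm \<Rightarrow> complex ^ 'm ^ 'n" where
  "adj A = (\<chi> i j. cnj (A $ j $ i))"

definition cscale :: "complex \<Rightarrow> complex ^ 'n ^ 'm \<Rightarrow> complex ^ 'n ^ 'm" where
  "cscale c A = (\<chi> i j. c * A $ i $ j)"

definition tensor_id :: "complex ^ 'l::finite ^ 'l \<Rightarrow> complex ^ ('l \<times> 'r::finite) ^ ('l \<times> 'r)" where
  "tensor_id A = (\<chi> p q. A $ fst p $ fst q * (if snd p = snd q then 1 else 0))"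

definition isometry :: "complex ^ 'n::finite ^ 'm::finite \<Rightarrow> bool" where
  "isometry V \<longleftrightarrow> adj V ** V = mat 1"

definition stloc :: "complex ^ 'n::finite ^ ('l::finite \<times> 'r::finite) \<Rightarrow> (complex ^ 'n ^ 'n) set" where
  "stloc chi = {A. \<exists>At :: complex ^ 'l ^ 'l.
       A ** adj chi = adj chi ** (tensor_id At :: complex ^ ('l \<times> 'r) ^ ('l \<times> 'r))
     \<and> chi ** A = tensor_id At ** chi}"

definition vN_subalgebra :: "(complex ^ 'n::finite ^ 'n) set \<Rightarrow> bool" where
  "vN_subalgebra S \<longleftrightarrow>
     mat 1 \<in> S
   \<and> (\<forall>A\<in>S. \<forall>B\<in>S. A + B \<in> S)
   \<and> (\<forall>c. \<forall>A\<in>S. cscale c A \<in> S)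
   \<and> (\<forall>A\<in>S. \<forall>B\<in>S. A ** B \<in> S)
   \<and> (\<forall>A\<in>S. adj A \<in> S)"

end

theory Submission
  imports Defs
begin

text \<open>The map \<open>At \<mapsto> At \<otimes> 1\<close> is a unital *-homomorphism, so the pairs \<open>(A, At)\<close> satisfying
  the two intertwining relations of strict locality are closed under sums, scalar multiples and
  products; adjoints are covered because the adjoint of each relation is the other one.\<close>

lemma matrix_add_rdistrib: "((A :: 'a::semiring_1 ^ 'n ^ 'm) + B) ** C = A ** C + B ** C"
  by (simp add: matrix_matrix_mult_def vec_eq_iff distrib_right sum.distrib)

lemma sum_UNIV_prod:
  "(\<Sum>q\<in>UNIV. f q) = (\<Sum>a\<in>UNIV. \<Sum>b\<in>UNIV. f (a, b))"
  for f :: "'a::finite \<times> 'b::finite \<Rightarrow> 'c::comm_monoid_add"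
  by (simp only: sum.cartesian_product UNIV_Times_UNIV case_prod_eta)

lemma adj_adj [simp]: "adj (adj A) = A"
  by (simp add: adj_def vec_eq_iff)

lemma adj_matrix_mult:
  "adj ((A :: complex ^ 'n::finite ^ 'm) ** (B :: complex ^ 'k::finite ^ 'n)) = adj B ** adj A"
  by (simp add: adj_def vec_eq_iff matrix_matrix_mult_def mult.commute)

lemma cscale_matrix_mult_left:
  "cscale c (A :: complex ^ 'n::finite ^ 'm) ** (B :: complex ^ 'k ^ 'n) = cscale c (A ** B)"
  by (simp add: cscale_def vec_eq_iff matrix_matrix_mult_def sum_distrib_left mult.assoc)

lemma cscale_matrix_mult_right:
  "(A :: complex ^ 'n::finite ^ 'm) ** cscale c (B :: complex ^ 'k ^ 'n) = cscale c (A ** B)"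
  by (simp add: cscale_def vec_eq_iff matrix_matrix_mult_def sum_distrib_left mult.left_commute)

lemma tensor_id_mat_1:
  "(tensor_id (mat 1) :: complex ^ ('l::finite \<times> 'r::finite) ^ ('l \<times> 'r)) = mat 1"
  by (simp add: tensor_id_def mat_def vec_eq_iff prod_eq_iff)

lemma tensor_id_add:
  "(tensor_id (A + B) :: complex ^ ('l::finite \<times> 'r::finite) ^ ('l \<times> 'r)) = tensor_id A + tensor_id B"
  by (simp add: tensor_id_def vec_eq_iff distrib_right)

lemma tensor_id_cscale:
  "(tensor_id (cscale c A) :: complex ^ ('l::finite \<times> 'r::finite) ^ ('l \<times> 'r)) = cscale c (tensor_id A)"
  by (simp add: tensor_id_def cscale_def vec_eq_iff)

lemma tensor_id_adj:
  "(tensor_id (adj A) :: complex ^ ('l::finite \<times> 'r::finite) ^ ('l \<times> 'r)) = adj (tensor_id A)"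
  by (auto simp: tensor_id_def adj_def vec_eq_iff)

lemma tensor_id_mult:
  "(tensor_id (A ** B) :: complex ^ ('l::finite \<times> 'r::finite) ^ ('l \<times> 'r)) = tensor_id A ** tensor_id B"
proof -
  have "(\<Sum>r\<in>UNIV. a * (if x = r then 1 else 0) * (b * (if r = y then 1 else 0)))
      = a * b * (if x = y then 1 else 0)" for a b :: complex and x y :: 'r
  proof -
    have "(\<Sum>r\<in>UNIV. a * (if x = r then 1 else 0) * (b * (if r = y then 1 else 0)))
        = (\<Sum>r\<in>UNIV. if r = x then a * b * (if x = y then 1 else 0) else 0)"
      by (rule sum.cong) auto
    then show ?thesis
      by simp
  qed
  then show ?thesis
    by (simp add: tensor_id_def matrix_matrix_mult_def vec_eq_iff sum_UNIV_prod sum_distrib_right)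
qed

definition stloc_witness ::
    "complex ^ 'n::finite ^ ('l::finite \<times> 'r::finite) \<Rightarrow> complex ^ 'l ^ 'l \<Rightarrow> complex ^ 'n ^ 'n \<Rightarrow> bool"
  where "stloc_witness chi At A \<longleftrightarrow>
    A ** adj chi = adj chi ** tensor_id At \<and> chi ** A = tensor_id At ** chi"

lemma stloc_iff: "A \<in> stloc chi \<longleftrightarrow> (\<exists>At. stloc_witness chi At A)"
  by (simp add: stloc_def stloc_witness_def)

lemma stloc_witness_mat_1: "stloc_witness chi (mat 1) (mat 1)"
  by (simp add: stloc_witness_def tensor_id_mat_1)

lemma stloc_witness_add:
  assumes "stloc_witness chi At A" and "stloc_witness chi Bt B"
  shows "stloc_witness chi (At + Bt) (A + B)"
  using assms
  by (simp add: stloc_witness_def tensor_id_add matrix_add_ldistrib matrix_add_rdistrib)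

lemma stloc_witness_cscale:
  assumes "stloc_witness chi At A"
  shows "stloc_witness chi (cscale c At) (cscale c A)"
  using assms
  by (simp add: stloc_witness_def tensor_id_cscale cscale_matrix_mult_left cscale_matrix_mult_right)

lemma stloc_witness_mult:
  assumes "stloc_witness chi At A" and "stloc_witness chi Bt B"
  shows "stloc_witness chi (At ** Bt) (A ** B)"
proof -
  from assms have A1: "A ** adj chi = adj chi ** tensor_id At" and A2: "chi ** A = tensor_id At ** chi"
    and B1: "B ** adj chi = adj chi ** tensor_id Bt" and B2: "chi ** B = tensor_id Bt ** chi"
    by (simp_all add: stloc_witness_def)
  have "(A ** B) ** adj chi = A ** (B ** adj chi)"
    by (rule matrix_mul_assoc[symmetric])
  also have "\<dots> = (A ** adj chi) ** tensor_id Bt"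
    unfolding B1 by (rule matrix_mul_assoc)
  also have "\<dots> = adj chi ** tensor_id (At ** Bt)"
    unfolding A1 tensor_id_mult by (rule matrix_mul_assoc[symmetric])
  finally have left: "(A ** B) ** adj chi = adj chi ** tensor_id (At ** Bt)" .
  have "chi ** (A ** B) = (chi ** A) ** B"
    by (rule matrix_mul_assoc)
  also have "\<dots> = tensor_id At ** (chi ** B)"
    unfolding A2 by (rule matrix_mul_assoc[symmetric])
  also have "\<dots> = tensor_id (At ** Bt) ** chi"
    unfolding B2 tensor_id_mult by (rule matrix_mul_assoc)
  finally have right: "chi ** (A ** B) = tensor_id (At ** Bt) ** chi" .
  from left right show ?thesis
    by (simp add: stloc_witness_def)
qed

lemma stloc_witness_adj:
  assumes "stloc_witness chi At A"
  shows "stloc_witness chi (adj At) (adj A)"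
proof -
  from assms have "A ** adj chi = adj chi ** tensor_id At" and "chi ** A = tensor_id At ** chi"
    by (simp_all add: stloc_witness_def)
  then have "adj (A ** adj chi) = adj (adj chi ** tensor_id At)"
    and "adj (chi ** A) = adj (tensor_id At ** chi)"
    by simp_all
  then show ?thesis
    by (simp add: stloc_witness_def adj_matrix_mult tensor_id_adj)
qed

theorem mainTheorem8:
  fixes chi :: "complex ^ 'n::finite ^ ('l::finite \<times> 'r::finite)"
  assumes "isometry chi"
  shows "vN_subalgebra (stloc chi)"
  unfolding vN_subalgebra_def
  by (auto simp: stloc_iff intro: stloc_witness_mat_1)
    (blast intro: stloc_witness_add stloc_witness_cscale stloc_witness_mult stloc_witness_adj)+

end
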